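(* Let $n,p,q$ be nonnegative integers. Then $$G_{n+2}(p,q)=\sum_{r=p+1}^{p+q+1}\binom{r-1}{p}\sum_{|\alpha|=p+q+1}\zeta(\alpha_1,\ldots,\alpha_{r-1},\alpha_r+n+1)$$ and $$G_{n+2}(p,q)=\frac{1}{p!\,q!\,n!}\int_{E_2}\left(\log\frac{1}{1-t_1}\right)^p\left(\log\frac{1}{1-t_2}\right)^q\left(\log\frac{t_2}{t_1}\right)^n\frac{dt_1\,dt_2}{(1-t_1)t_2}.$$
   Context: For positive integers $\alpha_1,\ldots,\alpha_r$ with $\alpha_r\ge 2$, the multiple zeta value is $\zeta(\alpha_1,\ldots,\alpha_r)=\sum_{1\le k_1<k_2<\cdots<k_r}k_1^{-\alpha_1}\cdots k_r^{-\alpha_r}$. For nonnegative integers $n,p,q$, $$G_{n+2}(p,q)=\sum_{1\le k_1<\cdots<k_{p+1}}\frac{1}{k_1\cdots k_p\,k_{p+1}^{n+2}}\sum_{1\le \ell_1\le \ell_2\le\cdots\le\ell_q\le k_{p+1}}\frac{1}{\ell_1\cdots\ell_q}.$$ For fixed $r$, $\sum_{|\alpha|=m}$ denotes the sum over all $r$-tuples $\alpha=(\alpha_1,\ldots,\alpha_r)$ of positive integers with $\alpha_1+\cdots+\alpha_r=m$. $E_2=\{(t_1,t_2)\in\mathbb{R}^2: 0<t_1<t_2<1\}$. *)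

theory Defs
  imports "HOL-Analysis.Analysis"
begin

definition incr_tuples :: "nat \<Rightarrow> nat list set" where
  "incr_tuples r = {k. length k = r \<and> sorted_wrt (<) k \<and> 0 \<notin> set k}"

text \<open>Multiple zeta value zeta(a_1,...,a_r) (convergent when the last entry is at least 2).\<close>
definition mzv :: "nat list \<Rightarrow> real" where
  "mzv a = (\<Sum>\<^sub>\<infinity> k \<in> incr_tuples (length a). \<Prod>i<length a. 1 / real (k ! i) ^ (a ! i))"

definition compositions :: "nat \<Rightarrow> nat \<Rightarrow> nat list set" where
  "compositions r m = {a. length a = r \<and> (\<forall>x\<in>set a. 0 < x) \<and> sum_list a = m}"

text \<open>Gfun n p q stands for G_{n+2}(p,q).\<close>
definition Gfun :: "nat \<Rightarrow> nat \<Rightarrow> nat \<Rightarrow> real" where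
  "Gfun n p q = (\<Sum>\<^sub>\<infinity> k \<in> incr_tuples (p + 1).
      (\<Prod>i<p. 1 / real (k ! i)) * (1 / real (k ! p) ^ (n + 2)) *
      (\<Sum>l \<in> {l. length l = q \<and> sorted l \<and> set l \<subseteq> {1..k ! p}}. \<Prod>i<q. 1 / real (l ! i)))"

definition E2 :: "(real \<times> real) set" where
  "E2 = {(t1, t2). 0 < t1 \<and> t1 < t2 \<and> t2 < 1}"

end

theory Submission
  imports Defs "HOL-Library.Multiset"
begin

text \<open>Grouping the sum by its last index \<open>K = k\<^sub>p\<^sub>+\<^sub>1\<close> gives
  \<open>G\<^sub>n\<^sub>+\<^sub>2(p,q) = \<Sum>\<^sub>K e\<^sub>p(K) h\<^sub>q(K) / K\<^bsup>n+2\<^esup>\<close>, where \<open>e\<^sub>p(K)\<close> is the elementary symmetric function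
  of degree \<open>p\<close> in \<open>1, 1/2, \<dots>, 1/(K-1)\<close> and \<open>h\<^sub>q(K)\<close> the complete homogeneous one of degree \<open>q\<close>
  in \<open>1, \<dots>, 1/K\<close>. A term of \<open>e\<^sub>p(K)\<close>, a term of \<open>h\<^sub>q(K)\<close> and a factor \<open>1/K\<close> multiply to
  \<open>1/\<Prod>M\<close> for a multiset \<open>M\<close> of size \<open>p+q+1\<close> with maximum \<open>K\<close>, and every such \<open>M\<close> arises
  \<open>(|supp M| - 1 choose p)\<close> times. Recording \<open>M\<close> by its support and multiplicities turns the sum over
  these multisets into the \<open>K\<close>-th slices of the zeta values \<open>\<zeta>(\<alpha>\<^sub>1, \<dots>, \<alpha>\<^sub>r + n + 1)\<close>;
  summing over \<open>K\<close> gives the first formula.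

  For the integral, \<open>(- ln (1 - x))\<^sup>p / (p! (1 - x)) = \<Sum>\<^sub>K e\<^sub>p(K+1) x\<^sup>K\<close>,
  \<open>\<integral>\<^sub>0\<^sup>y x\<^sup>K ln (y/x)\<^sup>n dx = n! y\<^bsup>K+1\<^esup> / (K+1)\<^bsup>n+1\<^esup>\<close> and
  \<open>\<integral>\<^sub>0\<^sup>1 y\<^sup>K (- ln (1 - y))\<^sup>q dy = q! h\<^sub>q(K+1) / (K+1)\<close>, so integrating term by term (all terms are
  nonnegative) yields \<open>p! q! n! \<Sum>\<^sub>K e\<^sub>p(K) h\<^sub>q(K) / K\<^bsup>n+2\<^esup>\<close>.\<close>

section \<open>Truncated harmonic symmetric sums\<close>

definition incr_tuples_below :: "nat \<Rightarrow> nat \<Rightarrow> nat list set" where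
  "incr_tuples_below r K = {k \<in> incr_tuples r. \<forall>x\<in>set k. x < K}"

definition sorted_tuples_upto :: "nat \<Rightarrow> nat \<Rightarrow> nat list set" where
  "sorted_tuples_upto q K = {l. length l = q \<and> sorted l \<and> set l \<subseteq> {1..K}}"

definition esym_harm :: "nat \<Rightarrow> nat \<Rightarrow> real" where
  "esym_harm p K = (\<Sum>k\<in>incr_tuples_below p K. \<Prod>i<p. 1 / real (k ! i))"

definition hsym_harm :: "nat \<Rightarrow> nat \<Rightarrow> real" where
  "hsym_harm q K = (\<Sum>l\<in>sorted_tuples_upto q K. \<Prod>i<q. 1 / real (l ! i))"

lemma incr_tuples_below_subset: "incr_tuples_below r K \<subseteq> {k. length k = r \<and> set k \<subseteq> {1..<K}}"
  by (auto simp: incr_tuples_below_def incr_tuples_def Suc_le_eq intro!: gr0I)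

lemma finite_incr_tuples_below: "finite (incr_tuples_below r K)"
  using finite_lists_length_eq[of "{1..<K}" r]
  by (auto simp: conj_commute intro: finite_subset[OF incr_tuples_below_subset])

lemma finite_sorted_tuples_upto: "finite (sorted_tuples_upto q K)"
proof (rule finite_subset)
  show "sorted_tuples_upto q K \<subseteq> {l. set l \<subseteq> {1..K} \<and> length l = q}"
    by (auto simp: sorted_tuples_upto_def)
qed (simp add: finite_lists_length_eq)

lemma esym_harm_nonneg: "esym_harm p K \<ge> 0"
  unfolding esym_harm_def by (intro sum_nonneg prod_nonneg) auto

lemma hsym_harm_nonneg: "hsym_harm q K \<ge> 0"
  unfolding hsym_harm_def by (intro sum_nonneg prod_nonneg) auto

lemma esym_harm_0 [simp]: "esym_harm 0 K = 1"
proof -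
  have "incr_tuples_below 0 K = {[]}" by (auto simp: incr_tuples_below_def incr_tuples_def)
  then show ?thesis by (simp add: esym_harm_def)
qed

lemma hsym_harm_0 [simp]: "hsym_harm 0 K = 1"
proof -
  have "sorted_tuples_upto 0 K = {[]}" by (auto simp: sorted_tuples_upto_def)
  then show ?thesis by (simp add: hsym_harm_def)
qed

lemma esym_harm_Suc_le_1: "K \<le> 1 \<Longrightarrow> esym_harm (Suc p) K = 0"
proof -
  assume "K \<le> 1"
  then have "incr_tuples_below (Suc p) K = {}"
    using incr_tuples_below_subset[of "Suc p" K] by (fastforce simp: length_Suc_conv)
  then show ?thesis by (simp add: esym_harm_def)
qed

lemma hsym_harm_Suc_0 [simp]: "hsym_harm (Suc q) 0 = 0"
proof -
  have "sorted_tuples_upto (Suc q) 0 = {}" by (auto simp: sorted_tuples_upto_def length_Suc_conv)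
  then show ?thesis by (simp add: hsym_harm_def)
qed

lemma prod_inverse_nth_snoc:
  "length m = p \<Longrightarrow> (\<Prod>i<Suc p. 1 / real ((m @ [K]) ! i)) = (\<Prod>i<p. 1 / real (m ! i)) / real K"
  by (simp add: nth_append)

lemma prod_inverse_power_nth_snoc:
  "length m = r \<Longrightarrow> (\<Prod>i<Suc r. 1 / real ((m @ [K]) ! i) ^ (e ! i)) =
     (\<Prod>i<r. 1 / real (m ! i) ^ (e ! i)) / real K ^ (e ! r)"
  by (simp add: nth_append)

lemma incr_tuples_Suc_iff:
  "k \<in> incr_tuples (Suc r) \<longleftrightarrow> (\<exists>K m. K \<ge> 1 \<and> m \<in> incr_tuples_below r K \<and> k = m @ [K])"
proof
  assume k: "k \<in> incr_tuples (Suc r)"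
  then have "k \<noteq> []" by (auto simp: incr_tuples_def)
  then obtain m K where "k = m @ [K]" by (metis rev_exhaust)
  with k show "\<exists>K m. K \<ge> 1 \<and> m \<in> incr_tuples_below r K \<and> k = m @ [K]"
    by (auto simp: incr_tuples_def incr_tuples_below_def sorted_wrt_append Suc_le_eq
        intro!: exI[of _ K] exI[of _ m])
qed (auto simp: incr_tuples_def incr_tuples_below_def sorted_wrt_append)

lemma incr_tuples_below_Suc_Suc:
  assumes "K \<ge> 1"
  shows "incr_tuples_below (Suc p) (Suc K) =
           incr_tuples_below (Suc p) K \<union> (\<lambda>m. m @ [K]) ` incr_tuples_below p K"
proof
  show "incr_tuples_below (Suc p) (Suc K) \<subseteq> incr_tuples_below (Suc p) K \<union> (\<lambda>m. m @ [K]) ` incr_tuples_below p K"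
  proof
    fix k assume k: "k \<in> incr_tuples_below (Suc p) (Suc K)"
    then obtain x m where xm: "m \<in> incr_tuples_below p x" "k = m @ [x]"
      using incr_tuples_Suc_iff by (auto simp: incr_tuples_below_def)
    moreover have "x \<le> K" using k xm by (auto simp: incr_tuples_below_def)
    ultimately show "k \<in> incr_tuples_below (Suc p) K \<union> (\<lambda>m. m @ [K]) ` incr_tuples_below p K"
      using k by (cases "x = K") (auto simp: incr_tuples_below_def)
  qed
  show "incr_tuples_below (Suc p) K \<union> (\<lambda>m. m @ [K]) ` incr_tuples_below p K \<subseteq> incr_tuples_below (Suc p) (Suc K)"
    using assms incr_tuples_Suc_iff[of _ p] by (fastforce simp: incr_tuples_below_def)
qed

lemma esym_harm_Suc_Suc: "esym_harm (Suc p) (Suc K) = esym_harm (Suc p) K + esym_harm p K / real K"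
proof (cases "K = 0")
  case True
  then show ?thesis by (simp add: esym_harm_Suc_le_1)
next
  case False
  then have "K \<ge> 1" by simp
  have "inj_on (\<lambda>m. m @ [K]) (incr_tuples_below p K)" by (auto simp: inj_on_def)
  moreover have "incr_tuples_below (Suc p) K \<inter> (\<lambda>m. m @ [K]) ` incr_tuples_below p K = {}"
    by (auto simp: incr_tuples_below_def)
  ultimately have "esym_harm (Suc p) (Suc K) =
      esym_harm (Suc p) K + (\<Sum>m\<in>incr_tuples_below p K. \<Prod>i<Suc p. 1 / real ((m @ [K]) ! i))"
    unfolding esym_harm_def incr_tuples_below_Suc_Suc[OF \<open>K \<ge> 1\<close>]
    by (simp add: sum.union_disjoint finite_incr_tuples_below sum.reindex)
  also have "(\<Sum>m\<in>incr_tuples_below p K. \<Prod>i<Suc p. 1 / real ((m @ [K]) ! i)) = esym_harm p K / real K"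
    unfolding esym_harm_def sum_divide_distrib
    by (intro sum.cong refl prod_inverse_nth_snoc) (simp add: incr_tuples_below_def incr_tuples_def)
  finally show ?thesis .
qed

lemma sorted_tuples_upto_Suc_Suc:
  "sorted_tuples_upto (Suc q) (Suc K) =
     sorted_tuples_upto (Suc q) K \<union> (\<lambda>l. l @ [Suc K]) ` sorted_tuples_upto q (Suc K)"
proof
  show "sorted_tuples_upto (Suc q) (Suc K) \<subseteq> sorted_tuples_upto (Suc q) K \<union> (\<lambda>l. l @ [Suc K]) ` sorted_tuples_upto q (Suc K)"
  proof
    fix l assume l: "l \<in> sorted_tuples_upto (Suc q) (Suc K)"
    show "l \<in> sorted_tuples_upto (Suc q) K \<union> (\<lambda>l. l @ [Suc K]) ` sorted_tuples_upto q (Suc K)"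
    proof (cases "Suc K \<in> set l")
      case False
      then show ?thesis using l by (auto simp: sorted_tuples_upto_def le_Suc_eq)
    next
      case True
      then obtain l' x where lx: "l = l' @ [x]" by (metis empty_iff list.set(1) rev_exhaust)
      then have "sorted l'" "\<forall>y\<in>set l'. y \<le> x" "x \<le> Suc K"
        using l by (auto simp: sorted_tuples_upto_def sorted_append)
      moreover from this True lx have "x = Suc K" by fastforce
      ultimately have "l' \<in> sorted_tuples_upto q (Suc K)"
        using l lx by (auto simp: sorted_tuples_upto_def)
      with lx \<open>x = Suc K\<close> show ?thesis by blast
    qed
  qed
  show "sorted_tuples_upto (Suc q) K \<union> (\<lambda>l. l @ [Suc K]) ` sorted_tuples_upto q (Suc K) \<subseteq> sorted_tuples_upto (Suc q) (Suc K)"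
    by (fastforce simp: sorted_tuples_upto_def sorted_append)
qed

lemma hsym_harm_Suc_Suc:
  "hsym_harm (Suc q) (Suc K) = hsym_harm (Suc q) K + hsym_harm q (Suc K) / real (Suc K)"
proof -
  have "inj_on (\<lambda>l. l @ [Suc K]) (sorted_tuples_upto q (Suc K))" by (auto simp: inj_on_def)
  moreover have "sorted_tuples_upto (Suc q) K \<inter> (\<lambda>l. l @ [Suc K]) ` sorted_tuples_upto q (Suc K) = {}"
    by (auto simp: sorted_tuples_upto_def)
  ultimately have "hsym_harm (Suc q) (Suc K) = hsym_harm (Suc q) K +
      (\<Sum>l\<in>sorted_tuples_upto q (Suc K). \<Prod>i<Suc q. 1 / real ((l @ [Suc K]) ! i))"
    unfolding hsym_harm_def sorted_tuples_upto_Suc_Suc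
    by (simp add: sum.union_disjoint finite_sorted_tuples_upto sum.reindex del: of_nat_Suc)
  also have "(\<Sum>l\<in>sorted_tuples_upto q (Suc K). \<Prod>i<Suc q. 1 / real ((l @ [Suc K]) ! i)) =
      hsym_harm q (Suc K) / real (Suc K)"
    unfolding hsym_harm_def sum_divide_distrib
    by (intro sum.cong refl prod_inverse_nth_snoc) (simp add: sorted_tuples_upto_def)
  finally show ?thesis .
qed

section \<open>A finite identity for multisets with a given maximum\<close>

definition msets_with_max :: "nat \<Rightarrow> nat \<Rightarrow> nat multiset set" where
  "msets_with_max N K = {M. size M = N \<and> set_mset M \<subseteq> {1..K} \<and> K \<in># M}"

definition inv_prod_mset :: "nat multiset \<Rightarrow> real" where
  "inv_prod_mset M = (\<Prod>x\<in>#M. 1 / real x)"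

lemma prod_nth_eq_prod_mset: "(\<Prod>i<length xs. f (xs ! i)) = (\<Prod>x\<in>#mset xs. f x)"
  by (induction xs) (auto simp: prod.lessThan_Suc_shift simp del: prod.lessThan_Suc)

lemma finite_msets_with_max: "finite (msets_with_max N K)"
proof (rule finite_subset)
  show "msets_with_max N K \<subseteq> mset ` {xs. set xs \<subseteq> {1..K} \<and> length xs = N}"
  proof
    fix M assume "M \<in> msets_with_max N K"
    then show "M \<in> mset ` {xs. set xs \<subseteq> {1..K} \<and> length xs = N}"
      by (intro image_eqI[of _ _ "sorted_list_of_multiset M"])
         (auto simp: msets_with_max_def simp flip: size_mset)
  qed
qed (simp add: finite_lists_length_eq)

lemma card_set_mset_le_size: "card (set_mset M) \<le> size M"
  by (metis mset_set_set_mset_msubset size_mset_mono size_mset_set)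

lemma mset_set_plus_diff_single:
  assumes "T \<subseteq> set_mset M - {K}" "K \<in># M"
  shows "mset_set T + (M - mset_set T - {#K#}) + {#K#} = M"
proof -
  have fin: "finite T" using assms(1) finite_subset by blast
  have "mset_set T \<subseteq># M"
    unfolding subseteq_mset_def
  proof
    fix x show "count (mset_set T) x \<le> count M x"
      using assms(1) fin by (cases "x \<in> T") (auto simp: count_mset_set Suc_le_eq)
  qed
  moreover have "K \<notin> T" using assms(1) by blast
  then have "{#K#} \<subseteq># M - mset_set T"
    using assms(2) fin by (simp add: in_diff_count count_mset_set)
  ultimately show ?thesis
    by (metis add.assoc subset_mset.add_diff_inverse subset_mset.diff_add)
qed

text \<open>A \<open>p\<close>-subset of \<open>{1..<K}\<close>, a \<open>q\<close>-multiset of \<open>{1..K}\<close> and one extra copy of \<open>K\<close>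
  together form a multiset with maximum \<open>K\<close>, with the subset marked inside its support.\<close>

definition unmark_mset :: "nat \<Rightarrow> nat multiset \<times> nat set \<Rightarrow> nat list \<times> nat list" where
  "unmark_mset K = (\<lambda>(M, T). (sorted_list_of_set T, sorted_list_of_multiset (M - mset_set T - {#K#})))"

lemma marked_mset_of_tuple_pair:
  assumes "K \<ge> 1" "k \<in> incr_tuples_below p K" "l \<in> sorted_tuples_upto q K"
  shows "(mset k + mset l + {#K#}, set k) \<in>
           (SIGMA M:msets_with_max (p + q + 1) K. {T. T \<subseteq> set_mset M - {K} \<and> card T = p})"
    and "unmark_mset K (mset k + mset l + {#K#}, set k) = (k, l)"
proof -
  have k: "length k = p" "sorted_wrt (<) k" "set k \<subseteq> {1..<K}"
    using assms(2) incr_tuples_below_subset by (auto simp: incr_tuples_below_def incr_tuples_def)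
  have l: "length l = q" "sorted l" "set l \<subseteq> {1..K}"
    using assms(3) by (auto simp: sorted_tuples_upto_def)
  have "distinct k" using k(2) by (simp add: strict_sorted_iff)
  have "mset k + mset l + {#K#} \<in> msets_with_max (p + q + 1) K"
    using k l assms(1) by (auto simp: msets_with_max_def)
  moreover have "set k \<subseteq> set_mset (mset k + mset l + {#K#}) - {K}"
    using k(3) by auto
  moreover have "card (set k) = p" using \<open>distinct k\<close> k(1) distinct_card by blast
  ultimately show "(mset k + mset l + {#K#}, set k) \<in>
      (SIGMA M:msets_with_max (p + q + 1) K. {T. T \<subseteq> set_mset M - {K} \<and> card T = p})"
    by simp
  have "sorted_list_of_set (set k) = k"
    using sorted_list_of_set_unique[of "set k" k] k(2) distinct_card[OF \<open>distinct k\<close>] by simp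
  then show "unmark_mset K (mset k + mset l + {#K#}, set k) = (k, l)"
    using \<open>distinct k\<close> l(2) by (simp add: unmark_mset_def mset_set_set sorted_sort_id)
qed

lemma unmark_mset_marked_mset:
  assumes "M \<in> msets_with_max (p + q + 1) K" "T \<subseteq> set_mset M - {K}" "card T = p"
  shows "unmark_mset K (M, T) \<in> incr_tuples_below p K \<times> sorted_tuples_upto q K"
    and "(\<lambda>(k, l). (mset k + mset l + {#K#}, set k)) (unmark_mset K (M, T)) = (M, T)"
proof -
  have M: "size M = p + q + 1" "set_mset M \<subseteq> {1..K}" "K \<in># M"
    using assms(1) by (auto simp: msets_with_max_def)
  have fin: "finite T" using assms(2) finite_subset by blast
  have eq: "mset_set T + (M - mset_set T - {#K#}) + {#K#} = M"
    using assms(2) M(3) by (rule mset_set_plus_diff_single)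
  have "\<forall>x\<in>T. 0 < x \<and> x < K" using assms(2) M(2) by fastforce
  then have "sorted_list_of_set T \<in> incr_tuples_below p K"
    using fin assms(3) by (auto simp: incr_tuples_below_def incr_tuples_def)
  moreover have "size (M - mset_set T - {#K#}) = q"
    using eq M(1) fin assms(3) by (metis add_diff_cancel_left' add_diff_cancel_right'
        size_mset_set size_single size_union)
  moreover have "set_mset (M - mset_set T - {#K#}) \<subseteq> {1..K}"
    using M(2) by (meson in_diffD subset_iff)
  ultimately show "unmark_mset K (M, T) \<in> incr_tuples_below p K \<times> sorted_tuples_upto q K"
    by (auto simp: unmark_mset_def sorted_tuples_upto_def simp flip: size_mset)
  have "mset (sorted_list_of_set T) = mset_set T"
    by (metis mset_sorted_list_of_multiset sorted_list_of_mset_set)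
  then show "(\<lambda>(k, l). (mset k + mset l + {#K#}, set k)) (unmark_mset K (M, T)) = (M, T)"
    using fin eq by (simp add: unmark_mset_def)
qed

lemma bij_betw_tuple_pairs_marked_msets:
  assumes "K \<ge> 1"
  shows "bij_betw (\<lambda>(k, l). (mset k + mset l + {#K#}, set k))
           (incr_tuples_below p K \<times> sorted_tuples_upto q K)
           (SIGMA M:msets_with_max (p + q + 1) K. {T. T \<subseteq> set_mset M - {K} \<and> card T = p})"
    (is "bij_betw ?mark ?A ?B")
proof (rule bij_betw_byWitness[where f' = "unmark_mset K"])
  show "\<forall>x\<in>?A. unmark_mset K (?mark x) = x"
    using marked_mset_of_tuple_pair(2)[OF assms] by auto
  show "\<forall>y\<in>?B. ?mark (unmark_mset K y) = y"
    using unmark_mset_marked_mset(2) by auto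
  show "?mark ` ?A \<subseteq> ?B"
  proof (rule image_subsetI)
    fix x assume "x \<in> ?A"
    then obtain k l where x: "x = (k, l)" "k \<in> incr_tuples_below p K" "l \<in> sorted_tuples_upto q K"
      by blast
    show "?mark x \<in> ?B" using marked_mset_of_tuple_pair(1)[OF assms x(2,3)] by (simp add: x)
  qed
  show "unmark_mset K ` ?B \<subseteq> ?A"
  proof (rule image_subsetI)
    fix y assume "y \<in> ?B"
    then obtain M T where y: "y = (M, T)" "M \<in> msets_with_max (p + q + 1) K"
        "T \<subseteq> set_mset M - {K}" "card T = p"
      by blast
    show "unmark_mset K y \<in> ?A" using unmark_mset_marked_mset(1)[OF y(2-4)] by (simp only: y)
  qed
qed

lemma esym_harm_mult_hsym_harm:
  assumes "K \<ge> 1"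
  shows "esym_harm p K * hsym_harm q K =
           real K * (\<Sum>M\<in>msets_with_max (p + q + 1) K.
                       real ((card (set_mset M) - 1) choose p) * inv_prod_mset M)"
proof -
  define marks where "marks M = {T. T \<subseteq> set_mset M - {K} \<and> card T = p}" for M :: "nat multiset"
  have "esym_harm p K * hsym_harm q K =
      (\<Sum>(k, l)\<in>incr_tuples_below p K \<times> sorted_tuples_upto q K.
         (\<Prod>i<p. 1 / real (k ! i)) * (\<Prod>i<q. 1 / real (l ! i)))"
    unfolding esym_harm_def hsym_harm_def sum_product sum.cartesian_product by simp
  also have "\<dots> = (\<Sum>(k, l)\<in>incr_tuples_below p K \<times> sorted_tuples_upto q K.
                    real K * inv_prod_mset (mset k + mset l + {#K#}))"
    using assms
    by (intro sum.cong refl)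
       (auto simp: inv_prod_mset_def incr_tuples_below_def incr_tuples_def sorted_tuples_upto_def
         prod_nth_eq_prod_mset[where f = "\<lambda>x. 1 / real x", symmetric])
  also have "\<dots> = (\<Sum>(M, T)\<in>Sigma (msets_with_max (p + q + 1) K) marks. real K * inv_prod_mset M)"
    using sum.reindex_bij_betw[OF bij_betw_tuple_pairs_marked_msets[OF assms, of p q],
        of "\<lambda>(M, T). real K * inv_prod_mset M"]
    by (simp add: split_def marks_def[abs_def])
  also have "\<dots> = (\<Sum>M\<in>msets_with_max (p + q + 1) K. real (card (marks M)) * (real K * inv_prod_mset M))"
    by (subst sum.Sigma[symmetric]) (auto simp: finite_msets_with_max marks_def)
  also have "\<dots> = (\<Sum>M\<in>msets_with_max (p + q + 1) K.
                    real K * (real ((card (set_mset M) - 1) choose p) * inv_prod_mset M))"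
  proof (intro sum.cong refl)
    fix M assume "M \<in> msets_with_max (p + q + 1) K"
    then have "card (marks M) = (card (set_mset M) - 1) choose p"
      unfolding marks_def by (subst n_subsets) (auto simp: msets_with_max_def)
    then show "real (card (marks M)) * (real K * inv_prod_mset M) =
        real K * (real ((card (set_mset M) - 1) choose p) * inv_prod_mset M)"
      by simp
  qed
  finally show ?thesis by (simp add: sum_distrib_left)
qed

definition mset_of_mults :: "nat list \<Rightarrow> nat list \<Rightarrow> nat multiset" where
  "mset_of_mults m a = (\<Sum>i<length m. replicate_mset (a ! i) (m ! i))"

lemma count_mset_of_mults_nth:
  assumes "distinct m" "j < length m"
  shows "count (mset_of_mults m a) (m ! j) = a ! j"
proof -
  have "count (mset_of_mults m a) (m ! j) = (\<Sum>i<length m. if i = j then a ! i else 0)"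
    unfolding mset_of_mults_def count_sum using assms by (intro sum.cong) (auto simp: nth_eq_iff_index_eq)
  also have "\<dots> = a ! j" using assms by simp
  finally show ?thesis .
qed

lemma count_mset_of_mults_notin: "x \<notin> set m \<Longrightarrow> count (mset_of_mults m a) x = 0"
  unfolding mset_of_mults_def count_sum by (intro sum.neutral) (auto simp: in_set_conv_nth)

lemma set_mset_mset_of_mults:
  assumes "length a = length m" "\<forall>y\<in>set a. 0 < y" "distinct m"
  shows "set_mset (mset_of_mults m a) = set m"
proof
  show "set_mset (mset_of_mults m a) \<subseteq> set m"
    using count_mset_of_mults_notin by (metis count_eq_zero_iff subsetI)
  show "set m \<subseteq> set_mset (mset_of_mults m a)"
  proof
    fix x assume "x \<in> set m"
    then obtain j where j: "j < length m" "m ! j = x" by (auto simp: in_set_conv_nth)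
    then have "count (mset_of_mults m a) x = a ! j" using count_mset_of_mults_nth assms(3) by blast
    moreover have "a ! j > 0" using assms(1,2) j by auto
    ultimately show "x \<in># mset_of_mults m a" by (metis count_greater_zero_iff)
  qed
qed

lemma card_set_mset_of_mults:
  assumes "length a = length m" "\<forall>y\<in>set a. 0 < y" "distinct m"
  shows "card (set_mset (mset_of_mults m a)) = length m"
  using set_mset_mset_of_mults[OF assms] assms(3) by (simp add: distinct_card)

lemma size_mset_of_mults: "length a = length m \<Longrightarrow> size (mset_of_mults m a) = sum_list a"
  unfolding mset_of_mults_def by (simp add: sum_list_sum_nth atLeast0LessThan)

lemma inv_prod_mset_of_mults:
  "inv_prod_mset (mset_of_mults m a) = (\<Prod>i<length m. 1 / real (m ! i) ^ (a ! i))"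
proof -
  have "inv_prod_mset (\<Sum>i<k. replicate_mset (a ! i) (m ! i)) = (\<Prod>i<k. 1 / real (m ! i) ^ (a ! i))" for k
    by (induction k) (auto simp: inv_prod_mset_def power_one_over)
  then show ?thesis unfolding mset_of_mults_def .
qed

lemma mset_of_mults_count:
  assumes "distinct m" "set m = set_mset M"
  shows "mset_of_mults m (map (count M) m) = M"
proof (rule multiset_eqI)
  fix x show "count (mset_of_mults m (map (count M) m)) x = count M x"
  proof (cases "x \<in> set m")
    case True
    then obtain j where "j < length m" "m ! j = x" by (auto simp: in_set_conv_nth)
    then show ?thesis using count_mset_of_mults_nth[OF assms(1)] by fastforce
  next
    case False
    then show ?thesis using count_mset_of_mults_notin assms(2) by (metis count_eq_zero_iff)
  qed
qed

lemma finite_compositions: "finite (compositions r N)"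
proof (rule finite_subset)
  show "compositions r N \<subseteq> {xs. set xs \<subseteq> {..N} \<and> length xs = r}"
    by (auto simp: compositions_def member_le_sum_list)
qed (simp add: finite_lists_length_eq)

text \<open>A multiset with maximum \<open>K\<close> is determined by its support \<open>m @ [K]\<close>, listed increasingly,
  and the multiplicities \<open>a\<close> of its elements, a composition of its size.\<close>

definition support_mults :: "nat \<Rightarrow> nat multiset \<Rightarrow> nat \<times> nat list \<times> nat list" where
  "support_mults K M = (let m = sorted_list_of_set (set_mset M - {K})
                        in (card (set_mset M), map (count M) (m @ [K]), m))"

lemma mset_of_mults_composition:
  assumes "K \<ge> 1" "r \<in> {1..N}" "a \<in> compositions r N" "m \<in> incr_tuples_below (r - 1) K"
  shows "mset_of_mults (m @ [K]) a \<in> msets_with_max N K"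
    and "support_mults K (mset_of_mults (m @ [K]) a) = (r, a, m)"
proof -
  let ?M = "mset_of_mults (m @ [K]) a"
  have a: "length a = r" "\<forall>y\<in>set a. 0 < y" "sum_list a = N"
    using assms(3) by (auto simp: compositions_def)
  have m: "length m = r - 1" "sorted_wrt (<) m" "set m \<subseteq> {1..<K}"
    using assms(4) incr_tuples_below_subset by (auto simp: incr_tuples_below_def incr_tuples_def)
  have len: "length (m @ [K]) = r" using m(1) assms(2) by simp
  have dist: "distinct (m @ [K])" using m(2,3) by (auto simp: strict_sorted_iff)
  have set_eq: "set_mset ?M = set (m @ [K])"
    using set_mset_mset_of_mults[OF _ a(2) dist] a(1) len by simp
  have "size ?M = N" using size_mset_of_mults[of a "m @ [K]"] a len by simp
  moreover have "set (m @ [K]) \<subseteq> {1..K}" using m(3) assms(1) by auto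
  ultimately show "?M \<in> msets_with_max N K" using set_eq by (simp add: msets_with_max_def)
  have "set (m @ [K]) - {K} = set m" using m(3) by auto
  then have "sorted_list_of_set (set_mset ?M - {K}) = m"
    using set_eq m(2) sorted_list_of_set_unique[of "set m" m] distinct_card[of m]
    by (simp add: strict_sorted_iff)
  moreover have "card (set_mset ?M) = r"
    using card_set_mset_of_mults[OF _ a(2) dist] a(1) len by simp
  moreover have "map (count ?M) (m @ [K]) = a"
  proof (rule nth_equalityI)
    fix i assume "i < length (map (count ?M) (m @ [K]))"
    then show "map (count ?M) (m @ [K]) ! i = a ! i"
      using count_mset_of_mults_nth[OF dist, of i a] by (simp del: map_append length_append)
  qed (use len a(1) in simp)
  ultimately show "support_mults K ?M = (r, a, m)" by (simp add: support_mults_def Let_def)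
qed

lemma support_mults_mset:
  assumes "M \<in> msets_with_max N K"
  shows "support_mults K M \<in> (SIGMA r:{1..N}. SIGMA a:compositions r N. incr_tuples_below (r - 1) K)"
    and "(\<lambda>(r, a, m). mset_of_mults (m @ [K]) a) (support_mults K M) = M"
proof -
  define m where "m = sorted_list_of_set (set_mset M - {K})"
  have MN: "size M = N" and MK: "set_mset M \<subseteq> {1..K}" "K \<in># M"
    using assms by (auto simp: msets_with_max_def)
  have m: "sorted_wrt (<) m" "set m = set_mset M - {K}" by (auto simp: m_def)
  have dist: "distinct (m @ [K])" using m by (auto simp: strict_sorted_iff)
  have set_eq: "set (m @ [K]) = set_mset M" using m MK by auto
  have len: "length m = card (set_mset M) - 1" using MK(2) by (simp add: m_def)
  have card_pos: "card (set_mset M) \<ge> 1" using MK(2) by (auto simp: Suc_le_eq card_gt_0_iff)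
  have "card (set_mset M) \<in> {1..N}" using card_pos card_set_mset_le_size[of M] MN by simp
  moreover have "sum_list (map (count M) (m @ [K])) = N"
    using sum_list_distinct_conv_sum_set[OF dist, of "count M"] set_eq MN
    by (metis size_multiset_overloaded_eq)
  then have "map (count M) (m @ [K]) \<in> compositions (card (set_mset M)) N"
    using set_eq len card_pos by (auto simp: compositions_def)
  moreover have "m \<in> incr_tuples_below (card (set_mset M) - 1) K"
    using m len MK(1) by (force simp: incr_tuples_below_def incr_tuples_def)
  ultimately show "support_mults K M \<in>
      (SIGMA r:{1..N}. SIGMA a:compositions r N. incr_tuples_below (r - 1) K)"
    by (simp add: support_mults_def m_def[symmetric])
  show "(\<lambda>(r, a, m). mset_of_mults (m @ [K]) a) (support_mults K M) = M"
    using mset_of_mults_count[OF dist set_eq] by (simp add: support_mults_def m_def[symmetric])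
qed

lemma bij_betw_compositions_msets:
  assumes "K \<ge> 1"
  shows "bij_betw (\<lambda>(r, a, m). mset_of_mults (m @ [K]) a)
           (SIGMA r:{1..N}. SIGMA a:compositions r N. incr_tuples_below (r - 1) K)
           (msets_with_max N K)"
    (is "bij_betw ?join ?A ?B")
proof (rule bij_betw_byWitness[where f' = "support_mults K"])
  show "\<forall>x\<in>?A. support_mults K (?join x) = x"
    using mset_of_mults_composition(2)[OF assms] by auto
  show "\<forall>M\<in>?B. ?join (support_mults K M) = M"
    using support_mults_mset(2) by blast
  show "?join ` ?A \<subseteq> ?B"
    using mset_of_mults_composition(1)[OF assms] by auto
  show "support_mults K ` ?B \<subseteq> ?A"
    using support_mults_mset(1) by blast
qed

text \<open>The part of \<open>\<zeta>(a)\<close> whose last summation index equals \<open>K\<close>.\<close>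

definition mzv_slice :: "nat list \<Rightarrow> nat \<Rightarrow> real" where
  "mzv_slice a K = (\<Sum>m\<in>incr_tuples_below (length a - 1) K.
                      \<Prod>i<length a - 1. 1 / real (m ! i) ^ (a ! i)) / real K ^ last a"

lemma mzv_slice_nonneg: "mzv_slice a K \<ge> 0"
  unfolding mzv_slice_def by (intro divide_nonneg_nonneg sum_nonneg prod_nonneg) auto

lemma mzv_slice_increase_last:
  assumes "a \<noteq> []"
  shows "mzv_slice (butlast a @ [last a + d]) K = mzv_slice a K / real K ^ d"
proof -
  have "(\<Prod>i<length a - 1. 1 / real (m ! i) ^ ((butlast a @ [last a + d]) ! i)) =
        (\<Prod>i<length a - 1. 1 / real (m ! i) ^ (a ! i))" for m
    by (intro prod.cong refl) (simp add: nth_append nth_butlast)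
  then show ?thesis
    using assms by (simp add: mzv_slice_def power_add field_simps)
qed

lemma mzv_slice_eq_sum_mset_of_mults:
  assumes "a \<in> compositions r N" "r \<ge> 1"
  shows "mzv_slice a K = (\<Sum>m\<in>incr_tuples_below (r - 1) K. inv_prod_mset (mset_of_mults (m @ [K]) a))"
proof -
  have a: "length a = r" using assms(1) by (simp add: compositions_def)
  then have "last a = a ! (r - 1)"
    using assms(2) by (metis last_conv_nth list.size(3) not_one_le_zero)
  show ?thesis
    unfolding mzv_slice_def inv_prod_mset_of_mults sum_divide_distrib a
  proof (intro sum.cong refl)
    fix m assume "m \<in> incr_tuples_below (r - 1) K"
    then have "length m = r - 1" by (simp add: incr_tuples_below_def incr_tuples_def)
    then show "(\<Prod>i<r - 1. 1 / real (m ! i) ^ (a ! i)) / real K ^ last a =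
        (\<Prod>i<length (m @ [K]). 1 / real ((m @ [K]) ! i) ^ (a ! i))"
      using prod_inverse_power_nth_snoc[of m "r - 1" K a] assms(2) \<open>last a = a ! (r - 1)\<close> by simp
  qed
qed

lemma sum_compositions_mzv_slice:
  assumes "K \<ge> 1"
  shows "(\<Sum>r = 1..N. \<phi> r * (\<Sum>a\<in>compositions r N. mzv_slice a K)) =
           (\<Sum>M\<in>msets_with_max N K. \<phi> (card (set_mset M)) * inv_prod_mset M)"
proof -
  let ?A = "SIGMA r:{1..N}. SIGMA a:compositions r N. incr_tuples_below (r - 1) K"
  have "(\<Sum>r = 1..N. \<phi> r * (\<Sum>a\<in>compositions r N. mzv_slice a K)) =
        (\<Sum>(r, a, m)\<in>?A. \<phi> r * inv_prod_mset (mset_of_mults (m @ [K]) a))"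
    by (simp add: sum.Sigma finite_compositions finite_incr_tuples_below sum_distrib_left split_def
        mzv_slice_eq_sum_mset_of_mults)
  also have "\<dots> = (\<Sum>(r, a, m)\<in>?A. \<phi> (card (set_mset (mset_of_mults (m @ [K]) a))) *
                      inv_prod_mset (mset_of_mults (m @ [K]) a))"
  proof (intro sum.cong refl, clarify)
    fix r a m assume "r \<in> {1..N}" "a \<in> compositions r N" "m \<in> incr_tuples_below (r - 1) K"
    from mset_of_mults_composition(2)[OF assms this]
    have "card (set_mset (mset_of_mults (m @ [K]) a)) = r" by (simp add: support_mults_def Let_def)
    then show "\<phi> r * inv_prod_mset (mset_of_mults (m @ [K]) a) =
        \<phi> (card (set_mset (mset_of_mults (m @ [K]) a))) * inv_prod_mset (mset_of_mults (m @ [K]) a)"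
      by simp
  qed
  also have "\<dots> = (\<Sum>M\<in>msets_with_max N K. \<phi> (card (set_mset M)) * inv_prod_mset M)"
    using sum.reindex_bij_betw[OF bij_betw_compositions_msets[OF assms, of N],
        of "\<lambda>M. \<phi> (card (set_mset M)) * inv_prod_mset M"]
    by (simp add: split_def)
  finally show ?thesis .
qed

definition G_term :: "nat \<Rightarrow> nat \<Rightarrow> nat \<Rightarrow> nat \<Rightarrow> real" where
  "G_term n p q K = esym_harm p K * hsym_harm q K / real K ^ (n + 2)"

lemma G_term_nonneg: "G_term n p q K \<ge> 0"
  unfolding G_term_def using esym_harm_nonneg hsym_harm_nonneg by simp

lemma G_term_eq_sum_mzv_slices:
  assumes "K \<ge> 1"
  shows "G_term n p q K =
           (\<Sum>r = p + 1..p + q + 1. real ((r - 1) choose p) *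
              (\<Sum>a\<in>compositions r (p + q + 1). mzv_slice (butlast a @ [last a + n + 1]) K))"
proof -
  let ?N = "p + q + 1"
  let ?S = "\<lambda>r. real ((r - 1) choose p) * (\<Sum>a\<in>compositions r ?N. mzv_slice a K)"
  have "(\<Sum>r = p + 1..?N. real ((r - 1) choose p) *
          (\<Sum>a\<in>compositions r ?N. mzv_slice (butlast a @ [last a + n + 1]) K)) =
        (\<Sum>r = p + 1..?N. ?S r) / real K ^ (n + 1)"
    unfolding sum_divide_distrib
  proof (intro sum.cong refl)
    fix r assume "r \<in> {p + 1..?N}"
    then have "a \<noteq> []" if "a \<in> compositions r ?N" for a
      using that by (auto simp: compositions_def)
    then show "real ((r - 1) choose p) *
          (\<Sum>a\<in>compositions r ?N. mzv_slice (butlast a @ [last a + n + 1]) K) = ?S r / real K ^ (n + 1)"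
      using mzv_slice_increase_last[of _ "n + 1" K]
      by (simp add: add.assoc flip: sum_divide_distrib)
  qed
  also have "(\<Sum>r = p + 1..?N. ?S r) = (\<Sum>r = 1..?N. ?S r)"
    by (rule sum.mono_neutral_left) auto
  also have "\<dots> = (\<Sum>M\<in>msets_with_max ?N K. real ((card (set_mset M) - 1) choose p) * inv_prod_mset M)"
    by (rule sum_compositions_mzv_slice[OF assms])
  also have "\<dots> = esym_harm p K * hsym_harm q K / real K"
    using esym_harm_mult_hsym_harm[OF assms, of p q] assms by simp
  finally show ?thesis
    using assms by (simp add: G_term_def power_Suc)
qed

section \<open>Summation over the last index\<close>

lemma has_sum_sum:
  fixes f :: "'i \<Rightarrow> 'a \<Rightarrow> 'b :: topological_comm_monoid_add"
  assumes "finite I" "\<And>i. i \<in> I \<Longrightarrow> (f i has_sum s i) A"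
  shows "((\<lambda>x. \<Sum>i\<in>I. f i x) has_sum (\<Sum>i\<in>I. s i)) A"
  using assms by (induction I rule: finite_induct) (auto intro: has_sum_add)

lemma has_sum_incr_tuples_Suc:
  fixes F :: "nat list \<Rightarrow> real"
  assumes nonneg: "\<And>k. k \<in> incr_tuples (Suc r) \<Longrightarrow> F k \<ge> 0"
    and slices: "((\<lambda>K. \<Sum>m\<in>incr_tuples_below r K. F (m @ [K])) has_sum S) {1..}"
  shows "(F has_sum S) (incr_tuples (Suc r))"
proof -
  define snoc where "snoc = (\<lambda>(K::nat, m::nat list). m @ [K])"
  let ?I = "SIGMA K:{1..}. incr_tuples_below r K"
  have inj: "inj_on snoc ?I" by (auto simp: inj_on_def snoc_def)
  have img: "snoc ` ?I = incr_tuples (Suc r)"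
    using incr_tuples_Suc_iff[of _ r] by (auto simp: snoc_def image_def Bex_def)
  have fibres: "((\<lambda>m. (F \<circ> snoc) (K, m)) has_sum (\<Sum>m\<in>incr_tuples_below r K. F (m @ [K])))
      (incr_tuples_below r K)" for K
    by (simp add: finite_incr_tuples_below snoc_def)
  have "(F \<circ> snoc) summable_on ?I"
    using nonneg incr_tuples_Suc_iff slices
    by (intro summable_on_SigmaI[OF fibres]) (auto simp: snoc_def summable_on_def)
  then have "((F \<circ> snoc) has_sum S) ?I"
    using has_sum_SigmaI[OF fibres slices] by blast
  then show ?thesis using has_sum_reindex[OF inj] img by metis
qed

lemma has_sum_mzv_slices:
  assumes "a \<noteq> []" "mzv_slice a summable_on {1..}"
  shows "(mzv_slice a has_sum mzv a) {1..}"
proof -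
  define r where "r = length a - 1"
  have la: "length a = Suc r" and last: "last a = a ! r"
    using assms(1) by (auto simp: r_def last_conv_nth)
  define F where "F k = (\<Prod>i<length a. 1 / real (k ! i) ^ (a ! i))" for k :: "nat list"
  have "(\<Sum>m\<in>incr_tuples_below r K. F (m @ [K])) = mzv_slice a K" for K
    unfolding mzv_slice_def sum_divide_distrib la diff_Suc_1
  proof (intro sum.cong refl)
    fix m assume "m \<in> incr_tuples_below r K"
    then have "length m = r" by (simp add: incr_tuples_below_def incr_tuples_def)
    then show "F (m @ [K]) = (\<Prod>i<r. 1 / real (m ! i) ^ (a ! i)) / real K ^ last a"
      using prod_inverse_power_nth_snoc[of m r K a] by (simp add: F_def la last)
  qed
  then have "(F has_sum infsum (mzv_slice a) {1..}) (incr_tuples (Suc r))"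
    using assms(2) by (intro has_sum_incr_tuples_Suc) (auto simp: F_def intro!: prod_nonneg)
  then have "mzv a = infsum (mzv_slice a) {1..}"
    unfolding mzv_def la[symmetric] F_def by (simp add: has_sum_iff)
  then show ?thesis using assms(2) by (simp add: has_sum_iff)
qed

lemma sum_prod_lists_eq_power:
  fixes f :: "nat \<Rightarrow> real"
  assumes "finite A"
  shows "(\<Sum>xs\<in>{xs. length xs = p \<and> set xs \<subseteq> A}. \<Prod>i<p. f (xs ! i)) = (\<Sum>x\<in>A. f x) ^ p"
proof (induction p)
  case 0
  have "{xs. length xs = 0 \<and> set xs \<subseteq> A} = {[]}" by auto
  then show ?case by simp
next
  case (Suc p)
  let ?L = "\<lambda>p. {xs. length xs = p \<and> set xs \<subseteq> A}"
  have "?L (Suc p) = (\<lambda>(x, xs). x # xs) ` (A \<times> ?L p)"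
    by (auto simp: length_Suc_conv image_def)
  moreover have "inj_on (\<lambda>(x, xs). x # xs) (A \<times> ?L p)" by (auto simp: inj_on_def)
  ultimately have "(\<Sum>xs\<in>?L (Suc p). \<Prod>i<Suc p. f (xs ! i)) =
      (\<Sum>(x, xs)\<in>A \<times> ?L p. f x * (\<Prod>i<p. f (xs ! i)))"
    by (simp add: sum.reindex split_def prod.lessThan_Suc_shift del: prod.lessThan_Suc)
  also have "\<dots> = (\<Sum>x\<in>A. f x) * (\<Sum>xs\<in>?L p. \<Prod>i<p. f (xs ! i))"
    by (simp add: sum_product sum.cartesian_product)
  finally show ?case using Suc by simp
qed

lemma sum_prod_inverse_le_harm_power:
  assumes "S \<subseteq> {xs. length xs = p \<and> set xs \<subseteq> {1..K}}"
  shows "(\<Sum>xs\<in>S. \<Prod>i<p. 1 / real (xs ! i)) \<le> harm K ^ p"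
proof -
  have "(\<Sum>xs\<in>S. \<Prod>i<p. 1 / real (xs ! i)) \<le>
      (\<Sum>xs\<in>{xs. length xs = p \<and> set xs \<subseteq> {1..K}}. \<Prod>i<p. 1 / real (xs ! i))"
    using assms finite_lists_length_eq[of "{1..K}" p]
    by (intro sum_mono2) (auto simp: conj_commute intro!: prod_nonneg)
  also have "\<dots> = harm K ^ p"
    using sum_prod_lists_eq_power[of "{1..K}" "\<lambda>x. 1 / real x" p]
    by (simp add: harm_def divide_inverse)
  finally show ?thesis .
qed

lemma harm_le_powr:
  assumes K: "K \<ge> 1" and e: "e > 0"
  shows "harm K \<le> (1 + 1 / e) * real K powr e"
proof -
  have "harm K - ln (real K) \<le> harm 1 - ln (real 1)"
    using euler_mascheroni_sequence_decreasing[of 1 K] K by simp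
  then have h: "harm K \<le> 1 + ln (real K)" by (simp add: harm_def)
  have "ln (real K powr e) \<le> real K powr e - 1" using K by (intro ln_le_minus_one) auto
  then have "ln (real K) \<le> real K powr e / e" using K e by (simp add: ln_powr field_simps)
  moreover have "1 \<le> real K powr e" using K e by (simp add: ge_one_powr_ge_zero)
  ultimately show ?thesis using h by (simp add: field_simps)
qed

text \<open>The bound \<open>e\<^sub>p(K) h\<^sub>q(K) \<le> (harm K)\<^bsup>p+q\<^esup>\<close> grows slower than any power of \<open>K\<close>.\<close>

lemma esym_harm_mult_hsym_harm_le_powr:
  obtains C where "\<And>K. K \<ge> 1 \<Longrightarrow> esym_harm p K * hsym_harm q K \<le> C * real K powr (1 / 2)"
proof -
  define N where "N = p + q"
  define e :: real where "e = 1 / (2 * (real N + 1))"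
  define C :: real where "C = (1 + 1 / e) ^ N"
  have e: "e > 0" and Ne: "real N * e \<le> 1 / 2" by (auto simp: e_def field_simps)
  have "esym_harm p K * hsym_harm q K \<le> C * real K powr (1 / 2)" if K: "K \<ge> 1" for K
  proof -
    have "esym_harm p K \<le> harm K ^ p"
      unfolding esym_harm_def using incr_tuples_below_subset[of p K]
      by (intro sum_prod_inverse_le_harm_power) fastforce
    moreover have "hsym_harm q K \<le> harm K ^ q"
      unfolding hsym_harm_def by (intro sum_prod_inverse_le_harm_power) (auto simp: sorted_tuples_upto_def)
    ultimately have "esym_harm p K * hsym_harm q K \<le> harm K ^ N"
      by (simp add: N_def power_add mult_mono hsym_harm_nonneg harm_nonneg)
    also have "\<dots> \<le> ((1 + 1 / e) * real K powr e) ^ N"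
      by (intro power_mono harm_le_powr K e harm_nonneg)
    also have "\<dots> = C * real K powr (real N * e)"
      using K by (simp add: C_def power_mult_distrib powr_realpow [symmetric] powr_powr mult.commute)
    also have "\<dots> \<le> C * real K powr (1 / 2)"
      using K Ne e by (intro mult_left_mono powr_mono) (auto simp: C_def)
    finally show ?thesis .
  qed
  then show ?thesis by (rule that)
qed

lemma summable_G_term: "summable (G_term n p q)"
proof -
  obtain C where C: "\<And>K. K \<ge> 1 \<Longrightarrow> esym_harm p K * hsym_harm q K \<le> C * real K powr (1 / 2)"
    using esym_harm_mult_hsym_harm_le_powr by blast
  have bound: "G_term n p q K \<le> C * real K powr (-3/2)" if K: "K \<ge> 1" for K
  proof -
    have "G_term n p q K \<le> esym_harm p K * hsym_harm q K / real K ^ 2"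
      unfolding G_term_def using K
      by (intro divide_left_mono mult_nonneg_nonneg esym_harm_nonneg hsym_harm_nonneg
          power_increasing) auto
    also have "\<dots> \<le> C * real K powr (1 / 2) / real K powr 2"
      using C[OF K] K by (simp add: powr_realpow divide_right_mono)
    also have "\<dots> = C * real K powr (-3/2)"
      using powr_diff[of "real K" "1 / 2" 2] by simp
    finally show ?thesis .
  qed
  have "summable (\<lambda>K. C * real K powr (-3/2))"
    by (intro summable_mult) (simp add: summable_real_powr_iff)
  then show ?thesis
    by (rule summable_comparison_test'[where N = 1]) (use bound G_term_nonneg in auto)
qed

lemma has_sum_G_term: "(G_term n p q has_sum (\<Sum>K. G_term n p q K)) {1..}"
proof -
  have "(G_term n p q has_sum (\<Sum>K. G_term n p q K)) UNIV"
    by (rule sums_nonneg_imp_has_sum[OF summable_sums[OF summable_G_term] G_term_nonneg])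
  then show ?thesis
    by (rule has_sum_cong_neutral[THEN iffD2, rotated -1]) (auto simp: G_term_def)
qed

lemma Gfun_eq_suminf_G_term: "Gfun n p q = (\<Sum>K. G_term n p q K)"
proof -
  define F where "F k = (\<Prod>i<p. 1 / real (k ! i)) * (1 / real (k ! p) ^ (n + 2)) *
      (\<Sum>l \<in> {l. length l = q \<and> sorted l \<and> set l \<subseteq> {1..k ! p}}. \<Prod>i<q. 1 / real (l ! i))"
    for k :: "nat list"
  have "(\<Sum>m\<in>incr_tuples_below p K. F (m @ [K])) = G_term n p q K" for K
  proof -
    have "F (m @ [K]) = (\<Prod>i<p. 1 / real (m ! i)) * hsym_harm q K / real K ^ (n + 2)"
      if "m \<in> incr_tuples_below p K" for m
    proof -
      have "length m = p" using that by (simp add: incr_tuples_below_def incr_tuples_def)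
      then show ?thesis
        by (simp add: F_def hsym_harm_def sorted_tuples_upto_def nth_append)
    qed
    then show ?thesis
      by (simp add: G_term_def esym_harm_def sum_distrib_right sum_divide_distrib)
  qed
  then have "(F has_sum (\<Sum>K. G_term n p q K)) (incr_tuples (Suc p))"
  proof (intro has_sum_incr_tuples_Suc)
    show "0 \<le> F k" for k
      unfolding F_def by (intro mult_nonneg_nonneg sum_nonneg prod_nonneg) auto
  qed (use has_sum_G_term in simp)
  then show ?thesis unfolding Gfun_def F_def by (simp add: has_sum_iff)
qed

lemma mzv_slice_le_G_term:
  assumes r: "r \<in> {p + 1..p + q + 1}" and a: "a \<in> compositions r (p + q + 1)" and K: "K \<ge> 1"
  shows "mzv_slice (butlast a @ [last a + n + 1]) K \<le> G_term n p q K"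
proof -
  let ?S = "\<lambda>r. \<Sum>a\<in>compositions r (p + q + 1). mzv_slice (butlast a @ [last a + n + 1]) K"
  have "p \<le> r - 1" using r by auto
  then have "1 \<le> real ((r - 1) choose p)" by (simp add: Suc_le_eq zero_less_binomial)
  have "mzv_slice (butlast a @ [last a + n + 1]) K \<le> ?S r"
    using a by (intro member_le_sum finite_compositions mzv_slice_nonneg)
  also have "\<dots> \<le> real ((r - 1) choose p) * ?S r"
  proof -
    have "0 \<le> ?S r" by (intro sum_nonneg mzv_slice_nonneg)
    with \<open>1 \<le> real ((r - 1) choose p)\<close> show ?thesis by (simp add: mult_le_cancel_right1)
  qed
  also have "\<dots> \<le> (\<Sum>r = p + 1..p + q + 1. real ((r - 1) choose p) * ?S r)"
    using r by (intro member_le_sum[where f = "\<lambda>r. real ((r - 1) choose p) * ?S r"]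
        mult_nonneg_nonneg sum_nonneg mzv_slice_nonneg) auto
  also have "\<dots> = G_term n p q K"
    using G_term_eq_sum_mzv_slices[OF K] by simp
  finally show ?thesis .
qed

lemma sum_compositions_mzv_eq_suminf_G_term:
  "(\<Sum>r = p + 1..p + q + 1. real ((r - 1) choose p) *
      (\<Sum>a \<in> compositions r (p + q + 1). mzv (butlast a @ [last a + n + 1]))) = (\<Sum>K. G_term n p q K)"
proof -
  define N where "N = p + q + 1"
  define shift where "shift a = butlast a @ [last a + n + 1]" for a :: "nat list"
  let ?R = "{p + 1..N}"
  let ?F = "\<lambda>K. \<Sum>r\<in>?R. real ((r - 1) choose p) * (\<Sum>a\<in>compositions r N. mzv_slice (shift a) K)"
  have "(mzv_slice (shift a) has_sum mzv (shift a)) {1..}"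
    if "r \<in> ?R" "a \<in> compositions r N" for r a
  proof (rule has_sum_mzv_slices)
    show "mzv_slice (shift a) summable_on {1..}"
      using has_sum_G_term mzv_slice_le_G_term[of r p q a] that
      by (intro summable_on_comparison_test[OF has_sum_imp_summable])
         (auto simp: mzv_slice_nonneg N_def shift_def)
  qed (simp add: shift_def)
  then have "(?F has_sum (\<Sum>r\<in>?R. real ((r - 1) choose p) * (\<Sum>a\<in>compositions r N. mzv (shift a)))) {1..}"
    by (intro has_sum_sum has_sum_cmult_right finite_compositions) auto
  moreover have "(?F has_sum (\<Sum>K. G_term n p q K)) {1..}"
    using has_sum_G_term
    by (rule has_sum_cong[THEN iffD1, rotated]) (simp add: G_term_eq_sum_mzv_slices N_def shift_def)
  ultimately show ?thesis unfolding N_def shift_def using has_sum_unique by blast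
qed

section \<open>Logarithmic moments\<close>

lemma tendsto_power_mult_neg_ln_power_at_right_0:
  "((\<lambda>s::real. s ^ Suc j * (- ln s) ^ k) \<longlongrightarrow> 0) (at_right 0)"
proof -
  define m where "m = real (Suc j)"
  have m: "m > 0" by (simp add: m_def)
  have "filterlim (\<lambda>s::real. - (m * ln s)) at_top (at_right 0)"
    using filterlim_tendsto_pos_mult_at_bot[OF tendsto_const m ln_at_0]
    by (simp add: filterlim_uminus_at_bot)
  then have "((\<lambda>s. (1 / m ^ k) * ((- (m * ln s)) ^ k / exp (- (m * ln s)))) \<longlongrightarrow> 0) (at_right 0)"
    by (intro tendsto_mult_right_zero filterlim_compose[OF tendsto_power_div_exp_0])
  moreover have "\<forall>\<^sub>F s in at_right 0.
      (1 / m ^ k) * ((- (m * ln s)) ^ k / exp (- (m * ln s))) = s ^ Suc j * (- ln s) ^ k"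
    using eventually_at_right_less[of "0::real"]
  proof (rule eventually_mono)
    fix s :: real assume s: "0 < s"
    have "exp (- (m * ln s)) = inverse (s ^ Suc j)"
      unfolding m_def by (simp only: exp_minus exp_of_nat_mult exp_ln[OF s])
    moreover have "(- (m * ln s)) ^ k = m ^ k * (- ln s) ^ k" by (simp add: power_mult_distrib[symmetric])
    ultimately show "(1 / m ^ k) * ((- (m * ln s)) ^ k / exp (- (m * ln s))) = s ^ Suc j * (- ln s) ^ k"
      using m s by (simp add: field_simps)
  qed
  ultimately show ?thesis by (rule Lim_transform_eventually)
qed

text \<open>A primitive of \<open>s\<^sup>j (- ln s)\<^sup>n\<close>, obtained by repeated integration by parts.\<close>

fun log_moment_primitive :: "nat \<Rightarrow> nat \<Rightarrow> real \<Rightarrow> real" where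
  "log_moment_primitive j 0 s = s ^ Suc j / real (Suc j)"
| "log_moment_primitive j (Suc n) s = s ^ Suc j * (- ln s) ^ Suc n / real (Suc j) +
     real (Suc n) / real (Suc j) * log_moment_primitive j n s"

lemma log_moment_primitive_deriv:
  "s > 0 \<Longrightarrow> (log_moment_primitive j n has_real_derivative s ^ j * (- ln s) ^ n) (at s)"
proof (induction n)
  case 0
  have "((\<lambda>s::real. s ^ Suc j) has_real_derivative real (Suc j) * s ^ j) (at s)"
    using DERIV_pow[of "Suc j" s UNIV] by simp
  from DERIV_cdivide[OF this, of "real (Suc j)"] show ?case by simp
next
  case (Suc n)
  have "((\<lambda>s. s ^ Suc j * (- ln s) ^ Suc n / real (Suc j)) has_real_derivative
        (real (Suc j) * s ^ j * (- ln s) ^ Suc n +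
         s ^ Suc j * (real (Suc n) * (- ln s) ^ n * (- (1 / s)))) / real (Suc j)) (at s)"
    using Suc.prems DERIV_pow[of "Suc j" s]
    by (auto intro!: derivative_eq_intros simp del: power_Suc of_nat_Suc)
  moreover have "(real (Suc j) * s ^ j * (- ln s) ^ Suc n +
       s ^ Suc j * (real (Suc n) * (- ln s) ^ n * (- (1 / s)))) / real (Suc j) =
     s ^ j * (- ln s) ^ Suc n - real (Suc n) / real (Suc j) * (s ^ j * (- ln s) ^ n)"
    using Suc.prems by (simp add: field_simps del: of_nat_Suc)
  ultimately have "((\<lambda>s. s ^ Suc j * (- ln s) ^ Suc n / real (Suc j)) has_real_derivative
        s ^ j * (- ln s) ^ Suc n - real (Suc n) / real (Suc j) * (s ^ j * (- ln s) ^ n)) (at s)"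
    by simp
  from DERIV_add[OF this DERIV_cmult[OF Suc.IH[OF Suc.prems], of "real (Suc n) / real (Suc j)"]]
  show ?case by (simp add: algebra_simps)
qed

lemma log_moment_primitive_at_right_0: "(log_moment_primitive j n \<longlongrightarrow> 0) (at_right 0)"
proof (induction n)
  case 0
  have "((\<lambda>s::real. s ^ Suc j / real (Suc j)) \<longlongrightarrow> 0 ^ Suc j / real (Suc j)) (at_right 0)"
    by (intro tendsto_intros) simp
  then show ?case by simp
next
  case (Suc n)
  have "((\<lambda>s. s ^ Suc j * (- ln s) ^ Suc n * (1 / real (Suc j)) +
      real (Suc n) / real (Suc j) * log_moment_primitive j n s) \<longlongrightarrow> 0 + 0) (at_right 0)"
    by (intro tendsto_add tendsto_mult_left_zero tendsto_mult_right_zero Suc.IH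
        tendsto_power_mult_neg_ln_power_at_right_0)
  then show ?case by simp
qed

lemma log_moment_primitive_1: "log_moment_primitive j n 1 = fact n / real (Suc j) ^ Suc n"
  by (induction n) (auto simp: field_simps)

lemma log_moment_integral:
  shows "set_integrable lborel {0<..<1::real} (\<lambda>s. s ^ j * (- ln s) ^ n)"
    and "(LINT s:{0<..<1}|lborel. s ^ j * (- ln s) ^ n) = fact n / real (Suc j) ^ Suc n"
proof -
  have e: "einterval 0 1 = {0<..<1::real}" by (auto simp: einterval_def)
  have A: "((log_moment_primitive j n \<circ> real_of_ereal) \<longlongrightarrow> 0) (at_right 0)"
    unfolding zero_ereal_def ereal_tendsto_simps by (rule log_moment_primitive_at_right_0)
  have "isCont (log_moment_primitive j n) 1"
    using log_moment_primitive_deriv[of 1 j n] by (auto intro: DERIV_isCont)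
  then have B: "((log_moment_primitive j n \<circ> real_of_ereal) \<longlongrightarrow> log_moment_primitive j n 1) (at_left 1)"
    unfolding one_ereal_def ereal_tendsto_simps by (simp add: isCont_def filterlim_at_split)
  have "0 < (1::ereal)" by simp
  note FTC = interval_integral_FTC_nonneg[OF this _ _ _ A B, of "\<lambda>s. s ^ j * (- ln s) ^ n"]
  have F: "\<And>x. 0 < ereal x \<Longrightarrow> ereal x < 1 \<Longrightarrow>
      (log_moment_primitive j n has_real_derivative x ^ j * (- ln x) ^ n) (at x)"
    by (rule log_moment_primitive_deriv) simp
  have C: "\<And>x. 0 < ereal x \<Longrightarrow> ereal x < 1 \<Longrightarrow> isCont (\<lambda>s. s ^ j * (- ln s) ^ n) x"
    by (auto intro!: continuous_intros)
  have N: "AE x in lborel. 0 < ereal x \<longrightarrow> ereal x < 1 \<longrightarrow> 0 \<le> x ^ j * (- ln x) ^ n"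
    by (auto intro!: mult_nonneg_nonneg zero_le_power simp: ln_less_zero_iff less_imp_le)
  show "set_integrable lborel {0<..<1::real} (\<lambda>s. s ^ j * (- ln s) ^ n)"
    using FTC(1)[OF F C N] e by simp
  have "(LBINT s=0..1. s ^ j * (- ln s) ^ n) = log_moment_primitive j n 1" using FTC(2)[OF F C N] by simp
  then show "(LINT s:{0<..<1}|lborel. s ^ j * (- ln s) ^ n) = fact n / real (Suc j) ^ Suc n"
    by (simp add: interval_lebesgue_integral_def e log_moment_primitive_1 zero_ereal_def[symmetric])
qed

section \<open>An alternating binomial sum\<close>

definition alt_binom_sum :: "nat \<Rightarrow> nat \<Rightarrow> real" where
  "alt_binom_sum K q = (\<Sum>i<K. real (K choose Suc i) * (-1) ^ i / real (Suc i) ^ q)"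

lemma alt_binom_sum_Suc_absorb:
  "(\<Sum>i<Suc K. real (K choose i) * (-1) ^ i / real (Suc i) ^ Suc q) = alt_binom_sum (Suc K) q / real (Suc K)"
  unfolding alt_binom_sum_def sum_divide_distrib
proof (intro sum.cong refl)
  fix i
  have "real (Suc i) * real (Suc K choose Suc i) = real (Suc K) * real (K choose i)"
    using Suc_times_binomial[of i K] by (metis of_nat_mult)
  then show "real (K choose i) * (-1) ^ i / real (Suc i) ^ Suc q =
      real (Suc K choose Suc i) * (-1) ^ i / real (Suc i) ^ q / real (Suc K)"
    by (simp add: field_simps del: binomial_Suc_Suc of_nat_Suc)
qed

lemma alt_binom_sum_Suc_Suc:
  "alt_binom_sum (Suc K) (Suc q) = alt_binom_sum K (Suc q) + alt_binom_sum (Suc K) q / real (Suc K)"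
proof -
  have "alt_binom_sum (Suc K) (Suc q) =
      (\<Sum>i<Suc K. real (K choose i) * (-1) ^ i / real (Suc i) ^ Suc q) +
      (\<Sum>i<Suc K. real (K choose Suc i) * (-1) ^ i / real (Suc i) ^ Suc q)"
    unfolding alt_binom_sum_def sum.distrib[symmetric]
    by (intro sum.cong refl) (simp add: add_divide_distrib distrib_right del: of_nat_Suc)
  also have "(\<Sum>i<Suc K. real (K choose Suc i) * (-1) ^ i / real (Suc i) ^ Suc q) = alt_binom_sum K (Suc q)"
    by (simp add: alt_binom_sum_def)
  finally show ?thesis using alt_binom_sum_Suc_absorb[of K q] by simp
qed

lemma alt_binom_sum_0: "K \<ge> 1 \<Longrightarrow> alt_binom_sum K 0 = 1"
proof -
  assume "K \<ge> 1"
  then obtain K' where K: "K = Suc K'" by (metis Suc_le_D One_nat_def)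
  have "(\<Sum>i\<le>Suc K'. (-1) ^ i * real (Suc K' choose i)) = 0"
    by (rule choose_alternating_sum) simp
  then have "(\<Sum>i\<le>K'. (-1) ^ i * real (Suc K' choose Suc i)) = 1"
    by (simp only: sum.atMost_Suc_shift) (simp add: sum_negf)
  then show ?thesis unfolding alt_binom_sum_def K by (simp add: lessThan_Suc_atMost mult.commute)
qed

lemma alt_binom_sum_eq_hsym_harm: "K \<ge> 1 \<or> q \<ge> 1 \<Longrightarrow> alt_binom_sum K q = hsym_harm q K"
proof (induction q arbitrary: K)
  case 0
  then show ?case by (simp add: alt_binom_sum_0)
next
  case (Suc q)
  note outer_IH = Suc.IH
  show ?case
  proof (induction K)
    case 0
    then show ?case by (simp add: alt_binom_sum_def)
  next
    case (Suc K)
    then show ?case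
      using outer_IH[of "Suc K"] by (simp add: alt_binom_sum_Suc_Suc hsym_harm_Suc_Suc del: of_nat_Suc)
  qed
qed

text \<open>Expanding \<open>(1 - s)\<^sup>K\<close> binomially reduces this to logarithmic moments.\<close>

lemma integral_one_minus_power_neg_ln_power:
  shows "set_integrable lborel {0<..<1::real} (\<lambda>s. (1 - s) ^ K * (- ln s) ^ q)"
    and "(LINT s:{0<..<1}|lborel. (1 - s) ^ K * (- ln s) ^ q) = fact q * hsym_harm q (Suc K) / real (Suc K)"
proof -
  let ?A = "{0<..<1::real}"
  let ?c = "\<lambda>i. real (K choose i) * (-1) ^ i"
  let ?g = "\<lambda>i s. indicator ?A s *\<^sub>R (s ^ i * (- ln s) ^ q)"
  have int_i: "integrable lborel (?g i)" for i
    using log_moment_integral(1)[of i q] by (simp add: set_integrable_def)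
  have "(1 - s) ^ K = (\<Sum>i\<le>K. ?c i * s ^ i)" for s :: real
    using binomial_ring[of "- s" 1 K] by (simp add: power_minus[of s] mult.assoc)
  then have eq: "(\<lambda>s. indicator ?A s *\<^sub>R ((1 - s) ^ K * (- ln s) ^ q)) = (\<lambda>s. \<Sum>i\<le>K. ?c i * ?g i s)"
    by (simp add: sum_distrib_left sum_distrib_right mult_ac)
  show "set_integrable lborel ?A (\<lambda>s. (1 - s) ^ K * (- ln s) ^ q)"
    unfolding set_integrable_def eq using int_i by auto
  have "(LINT s:?A|lborel. (1 - s) ^ K * (- ln s) ^ q) = (\<Sum>i\<le>K. ?c i * (fact q / real (Suc i) ^ Suc q))"
    unfolding set_lebesgue_integral_def eq using int_i log_moment_integral(2)
    by (simp add: set_lebesgue_integral_def)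
  also have "\<dots> = fact q * (\<Sum>i<Suc K. real (K choose i) * (-1) ^ i / real (Suc i) ^ Suc q)"
    by (simp add: sum_distrib_left lessThan_Suc_atMost field_simps del: of_nat_Suc)
  also have "\<dots> = fact q * hsym_harm q (Suc K) / real (Suc K)"
    using alt_binom_sum_Suc_absorb[of K q] alt_binom_sum_eq_hsym_harm[of "Suc K" q] by simp
  finally show "(LINT s:?A|lborel. (1 - s) ^ K * (- ln s) ^ q) = fact q * hsym_harm q (Suc K) / real (Suc K)" .
qed

section \<open>The generating function of the elementary symmetric sums\<close>

lemma esym_harm_Suc_eq_sum: "esym_harm (Suc p) (Suc K) = (\<Sum>N\<le>K. esym_harm p N / real N)"
  by (induction K) (simp_all add: esym_harm_Suc_le_1 esym_harm_Suc_Suc)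

lemma summable_esym_harm_div_powser:
  assumes "summable (\<lambda>K. esym_harm p (Suc K) * R ^ K)" "0 \<le> R"
  shows "summable (\<lambda>N. esym_harm p N / real N * R ^ N)"
proof -
  have "summable (\<lambda>M. R * (esym_harm p (Suc M) * R ^ M))"
    using assms(1) by (rule summable_mult)
  then have "summable (\<lambda>M. esym_harm p (Suc M) / real (Suc M) * R ^ Suc M)"
  proof (rule summable_comparison_test'[where N = 0])
    fix M :: nat
    have "esym_harm p (Suc M) / real (Suc M) \<le> esym_harm p (Suc M) / 1"
      by (intro divide_left_mono) (auto simp: esym_harm_nonneg)
    then have "esym_harm p (Suc M) / real (Suc M) * (R * R ^ M) \<le> esym_harm p (Suc M) * (R * R ^ M)"
      using assms(2) by (intro mult_right_mono) auto
    then show "norm (esym_harm p (Suc M) / real (Suc M) * R ^ Suc M) \<le> R * (esym_harm p (Suc M) * R ^ M)"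
      using assms(2) esym_harm_nonneg[of p "Suc M"] by (simp add: mult_ac)
  qed
  then show ?thesis using summable_Suc_iff[of "\<lambda>N. esym_harm p N / real N * R ^ N"] by simp
qed

text \<open>If \<open>\<Sum>\<^sub>K e\<^sub>p(K+1) x\<^sup>K = (- ln (1 - x))\<^sup>p / (p! (1 - x))\<close>, then the series below has this
  derivative, as has \<open>(- ln (1 - x))\<^bsup>p+1\<^esup> / (p+1)!\<close>, and both vanish at \<open>0\<close>.\<close>

lemma esym_harm_div_sums:
  assumes IH: "\<And>x. 0 \<le> x \<Longrightarrow> x < 1 \<Longrightarrow>
      (\<lambda>K. esym_harm p (Suc K) * x ^ K) sums ((- ln (1 - x)) ^ p / (fact p * (1 - x)))"
    and x: "0 \<le> x" "x < 1"
  shows "(\<lambda>N. esym_harm p N / real N * x ^ N) sums ((- ln (1 - x)) ^ Suc p / fact (Suc p))"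
proof -
  define c where "c N = esym_harm p N / real N" for N
  define \<Phi> where "\<Phi> x = (- ln (1 - x)) ^ Suc p / fact (Suc p)" for x :: real
  define G where "G x = (\<Sum>N. c N * x ^ N)" for x :: real
  have summ: "summable (\<lambda>N. c N * R ^ N)" if "0 \<le> R" "R < 1" for R
    unfolding c_def using IH[OF that] that(1)
    by (intro summable_esym_harm_div_powser) (simp_all add: sums_iff)
  have dG: "(G has_real_derivative (- ln (1 - y)) ^ p / (fact p * (1 - y))) (at y)" if y: "0 \<le> y" "y < 1" for y
  proof -
    define R where "R = (1 + y) / 2"
    have R: "0 \<le> R" "R < 1" "norm y < norm R" using y by (auto simp: R_def)
    have "(G has_real_derivative (\<Sum>N. diffs c N * y ^ N)) (at y)"
      unfolding G_def by (rule termdiffs_strong[OF summ[OF R(1,2)] R(3)])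
    moreover have "diffs c N = esym_harm p (Suc N)" for N
      by (simp add: diffs_def c_def)
    ultimately show ?thesis using IH[OF y] by (simp add: sums_iff)
  qed
  have dPhi: "(\<Phi> has_real_derivative (- ln (1 - y)) ^ p / (fact p * (1 - y))) (at y)" if y: "y < 1" for y
  proof -
    have "((\<lambda>y. - ln (1 - y)) has_real_derivative 1 / (1 - y)) (at y)"
      using y by (auto intro!: derivative_eq_intros simp: field_simps)
    then have "(\<Phi> has_real_derivative
        real (Suc p) * (1 / (1 - y) * (- ln (1 - y)) ^ (Suc p - Suc 0)) / fact (Suc p)) (at y)"
      unfolding \<Phi>_def by (intro DERIV_cdivide DERIV_power)
    moreover have "real (Suc p) * (1 / (1 - y) * (- ln (1 - y)) ^ (Suc p - Suc 0)) / fact (Suc p) =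
        (- ln (1 - y)) ^ p / (fact p * (1 - y))"
      by (simp add: fact_Suc del: of_nat_Suc)
    ultimately show ?thesis by (simp only:)
  qed
  have "\<exists>d. \<forall>y\<in>{0..<1}. (\<lambda>y. G y - \<Phi> y) y = d"
  proof (rule has_field_derivative_zero_constant)
    fix y :: real assume "y \<in> {0..<1}"
    then show "((\<lambda>y. G y - \<Phi> y) has_real_derivative 0) (at y within {0..<1})"
      using DERIV_diff[OF dG dPhi, of y] by (auto intro: has_field_derivative_at_within)
  qed (rule convex_real_interval)
  then obtain d where d: "\<And>y. y \<in> {0..<1} \<Longrightarrow> G y - \<Phi> y = d" by blast
  have "G 0 = c 0" unfolding G_def by (rule powser_zero)
  then have "G 0 = 0" by (simp add: c_def)
  moreover have "\<Phi> 0 = 0" by (simp add: \<Phi>_def)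
  ultimately have "G x = \<Phi> x" using d[of 0] d[of x] x by simp
  then show ?thesis
    using summ[OF x] by (simp add: G_def \<Phi>_def c_def sums_iff)
qed

lemma esym_harm_generating_function:
  assumes "0 \<le> x" "x < 1"
  shows "(\<lambda>K. esym_harm p (Suc K) * x ^ K) sums ((- ln (1 - x)) ^ p / (fact p * (1 - x)))"
  using assms
proof (induction p arbitrary: x)
  case 0
  then show ?case using geometric_sums[of x] by simp
next
  case (Suc p)
  have "(\<lambda>k. \<Sum>i\<le>k. (esym_harm p i / real i * x ^ i) * x ^ (k - i)) sums
      ((\<Sum>k. esym_harm p k / real k * x ^ k) * (\<Sum>k. x ^ k))"
  proof (rule Cauchy_product_sums)
    show "summable (\<lambda>k. norm (esym_harm p k / real k * x ^ k))"
      using esym_harm_div_sums[OF Suc.IH Suc.prems] Suc.prems esym_harm_nonneg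
      by (simp add: sums_iff)
    show "summable (\<lambda>k. norm (x ^ k))"
      using Suc.prems by (simp add: summable_geometric)
  qed
  moreover have "(\<Sum>i\<le>k. (esym_harm p i / real i * x ^ i) * x ^ (k - i)) = esym_harm (Suc p) (Suc k) * x ^ k" for k
    by (simp add: esym_harm_Suc_eq_sum sum_distrib_right mult.assoc power_add[symmetric])
  moreover have "(\<Sum>k. esym_harm p k / real k * x ^ k) * (\<Sum>k. x ^ k) =
      (- ln (1 - x)) ^ Suc p / (fact (Suc p) * (1 - x))"
    using esym_harm_div_sums[OF Suc.IH Suc.prems] suminf_geometric[of x] Suc.prems
    by (simp add: sums_iff)
  ultimately show ?case by simp
qed

section \<open>The double integral\<close>

lemma nn_integral_log_moment:
  "(\<integral>\<^sup>+ u. ennreal (indicator {0<..<1} u * (u ^ K * (- ln u) ^ n)) \<partial>lborel) =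
     ennreal (fact n / real (Suc K) ^ Suc n)"
proof -
  have "integrable lborel (\<lambda>u. indicator {0<..<1::real} u * (u ^ K * (- ln u) ^ n))"
    using log_moment_integral(1)[of K n] by (simp add: set_integrable_def)
  moreover have "AE u in lborel. 0 \<le> indicator {0<..<1::real} u * (u ^ K * (- ln u) ^ n)"
    by (auto simp: indicator_def ln_less_zero_iff less_imp_le intro!: mult_nonneg_nonneg zero_le_power)
  moreover have "(LBINT u. indicator {0<..<1::real} u * (u ^ K * (- ln u) ^ n)) = fact n / real (Suc K) ^ Suc n"
    using log_moment_integral(2)[of K n] by (simp add: set_lebesgue_integral_def)
  ultimately show ?thesis by (simp add: nn_integral_eq_integral)
qed

lemma nn_integral_power_ln_ratio_power:
  assumes y: "y > 0"
  shows "(\<integral>\<^sup>+ x. ennreal (indicator {0<..<y} x * (x ^ K * (ln (y / x)) ^ n)) \<partial>lborel) =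
           ennreal (y ^ Suc K * fact n / real (Suc K) ^ Suc n)"
proof -
  have "(\<integral>\<^sup>+ x. ennreal (indicator {0<..<y} x * (x ^ K * (ln (y / x)) ^ n)) \<partial>lborel) =
      ennreal \<bar>y\<bar> * (\<integral>\<^sup>+ u. ennreal (indicator {0<..<y} (0 + y * u) *
        ((0 + y * u) ^ K * (ln (y / (0 + y * u))) ^ n)) \<partial>lborel)"
    by (rule nn_integral_real_affine) (use y in auto)
  also have "(\<integral>\<^sup>+ u. ennreal (indicator {0<..<y} (0 + y * u) *
        ((0 + y * u) ^ K * (ln (y / (0 + y * u))) ^ n)) \<partial>lborel) =
      (\<integral>\<^sup>+ u. ennreal (y ^ K) * ennreal (indicator {0<..<1} u * (u ^ K * (- ln u) ^ n)) \<partial>lborel)"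
  proof (rule nn_integral_cong)
    fix u :: real
    show "ennreal (indicator {0<..<y} (0 + y * u) * ((0 + y * u) ^ K * (ln (y / (0 + y * u))) ^ n)) =
        ennreal (y ^ K) * ennreal (indicator {0<..<1} u * (u ^ K * (- ln u) ^ n))"
    proof (cases "0 < u \<and> u < 1")
      case True
      then have "ln (y / (y * u)) = - ln u" using y by (simp add: ln_div)
      moreover have "0 < y * u \<and> y * u < y" using True y by (simp add: mult_less_cancel_left1)
      moreover have "0 \<le> u ^ K * (- ln u) ^ n" using True by (simp add: ln_less_zero_iff less_imp_le)
      ultimately show ?thesis
        using True y by (simp add: ennreal_mult[symmetric] power_mult_distrib mult_ac)
    next
      case False
      then have "\<not> (0 < y * u \<and> y * u < y)"
        using y by (auto simp: zero_less_mult_iff mult_less_cancel_left1)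
      then have "indicator {0<..<y} (0 + y * u) = (0::real)" "indicator {0<..<1} u = (0::real)"
        using False by (auto simp: indicator_def)
      then show ?thesis by simp
    qed
  qed
  also have "\<dots> = ennreal (y ^ K) * ennreal (fact n / real (Suc K) ^ Suc n)"
    by (subst nn_integral_cmult) (auto simp: nn_integral_log_moment)
  finally show ?thesis using y by (simp add: ennreal_mult[symmetric] mult_ac)
qed

lemma nn_integral_power_ln_inverse_one_minus_power:
  "(\<integral>\<^sup>+ y. ennreal (indicator {0<..<1} y * (y ^ K * (ln (1 / (1 - y))) ^ q)) \<partial>lborel) =
     ennreal (fact q * hsym_harm q (Suc K) / real (Suc K))"
proof -
  have "(\<integral>\<^sup>+ y. ennreal (indicator {0<..<1} y * (y ^ K * (ln (1 / (1 - y))) ^ q)) \<partial>lborel) =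
      ennreal \<bar>-1\<bar> * (\<integral>\<^sup>+ s. ennreal (indicator {0<..<1} (1 + (-1) * s) *
        ((1 + (-1) * s) ^ K * (ln (1 / (1 - (1 + (-1) * s)))) ^ q)) \<partial>lborel)"
    by (rule nn_integral_real_affine) auto
  also have "\<dots> = (\<integral>\<^sup>+ s. ennreal (indicator {0<..<1} s *\<^sub>R ((1 - s) ^ K * (- ln s) ^ q)) \<partial>lborel)"
    unfolding abs_neg_one ennreal_1 mult_1
    by (intro nn_integral_cong) (auto simp: indicator_def ln_div)
  also have "\<dots> = ennreal (LBINT s. indicator {0<..<1} s *\<^sub>R ((1 - s) ^ K * (- ln s) ^ q))"
  proof (rule nn_integral_eq_integral)
    show "integrable lborel (\<lambda>s. indicator {0<..<1::real} s *\<^sub>R ((1 - s) ^ K * (- ln s) ^ q))"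
      using integral_one_minus_power_neg_ln_power(1)[of K q] by (simp add: set_integrable_def)
    show "AE s in lborel. 0 \<le> indicator {0<..<1::real} s *\<^sub>R ((1 - s) ^ K * (- ln s) ^ q)"
      by (auto simp: indicator_def ln_less_zero_iff less_imp_le intro!: mult_nonneg_nonneg zero_le_power)
  qed
  also have "\<dots> = ennreal (fact q * hsym_harm q (Suc K) / real (Suc K))"
    using integral_one_minus_power_neg_ln_power(2)[of K q] by (simp add: set_lebesgue_integral_def)
  finally show ?thesis .
qed

definition G_integrand :: "nat \<Rightarrow> nat \<Rightarrow> nat \<Rightarrow> real \<times> real \<Rightarrow> real" where
  "G_integrand n p q t = (ln (1 / (1 - fst t))) ^ p * (ln (1 / (1 - snd t))) ^ q *
     (ln (snd t / fst t)) ^ n / ((1 - fst t) * snd t)"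

lemma G_integrand_sums:
  assumes "0 < x" "x < y" "y < 1"
  shows "(\<lambda>K. fact p * esym_harm p (Suc K) * (ln (1 / (1 - y))) ^ q / y * (x ^ K * (ln (y / x)) ^ n))
           sums G_integrand n p q (x, y)"
proof -
  define c where "c = fact p * (ln (y / x)) ^ n * (ln (1 / (1 - y))) ^ q / y"
  have "(\<lambda>K. c * (esym_harm p (Suc K) * x ^ K)) sums (c * ((- ln (1 - x)) ^ p / (fact p * (1 - x))))"
    using assms by (intro sums_mult esym_harm_generating_function) auto
  moreover have "ln (1 / (1 - x)) = - ln (1 - x)" using assms by (simp add: ln_div)
  ultimately show ?thesis
    using assms by (simp add: c_def G_integrand_def mult_ac)
qed

lemma nn_integral_G_integrand_inner:
  assumes y: "0 < y" "y < 1"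
  shows "(\<integral>\<^sup>+ x. ennreal (indicator E2 (x, y) * G_integrand n p q (x, y)) \<partial>lborel) =
           (\<Sum>K. ennreal (fact p * fact n * esym_harm p (Suc K) / real (Suc K) ^ Suc n *
                             (y ^ K * (ln (1 / (1 - y))) ^ q)))"
proof -
  define A where "A K = fact p * esym_harm p (Suc K) * (ln (1 / (1 - y))) ^ q / y" for K
  have A: "A K \<ge> 0" for K using y esym_harm_nonneg by (simp add: A_def)
  define g where "g K x = indicator {0<..<y} x * (A K * (x ^ K * (ln (y / x)) ^ n))" for K x
  have g_nonneg: "g K x \<ge> 0" for K x
    using A by (auto simp: g_def indicator_def ln_ge_zero_iff)
  have "ennreal (indicator E2 (x, y) * G_integrand n p q (x, y)) = (\<Sum>K. ennreal (g K x))" for x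
  proof (cases "0 < x \<and> x < y")
    case True
    then have "(\<lambda>K. g K x) sums (indicator E2 (x, y) * G_integrand n p q (x, y))"
      using G_integrand_sums[of x y p q n] y by (simp add: g_def A_def E2_def)
    then show ?thesis using suminf_ennreal_eq[OF g_nonneg] by simp
  next
    case False
    then have "indicator E2 (x, y) = (0::real)" "\<And>K. g K x = 0"
      by (auto simp: E2_def indicator_def g_def)
    then show ?thesis by simp
  qed
  then have "(\<integral>\<^sup>+ x. ennreal (indicator E2 (x, y) * G_integrand n p q (x, y)) \<partial>lborel) =
      (\<Sum>K. \<integral>\<^sup>+ x. ennreal (g K x) \<partial>lborel)"
    by (simp add: nn_integral_suminf g_def)
  also have "\<dots> = (\<Sum>K. ennreal (A K) * ennreal (y ^ Suc K * fact n / real (Suc K) ^ Suc n))"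
  proof (rule suminf_cong)
    fix K
    have "(\<integral>\<^sup>+ x. ennreal (g K x) \<partial>lborel) =
        (\<integral>\<^sup>+ x. ennreal (A K) * ennreal (indicator {0<..<y} x * (x ^ K * (ln (y / x)) ^ n)) \<partial>lborel)"
      using A by (intro nn_integral_cong) (auto simp: g_def indicator_def ln_ge_zero_iff ennreal_mult')
    then show "(\<integral>\<^sup>+ x. ennreal (g K x) \<partial>lborel) = ennreal (A K) * ennreal (y ^ Suc K * fact n / real (Suc K) ^ Suc n)"
      by (simp add: nn_integral_cmult nn_integral_power_ln_ratio_power[OF y(1)])
  qed
  also have "\<dots> = (\<Sum>K. ennreal (fact p * fact n * esym_harm p (Suc K) / real (Suc K) ^ Suc n *
                             (y ^ K * (ln (1 / (1 - y))) ^ q)))"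
    using A y by (intro suminf_cong) (simp add: ennreal_mult[symmetric] A_def field_simps)
  finally show ?thesis .
qed

lemma G_integrand_measurable:
  "(\<lambda>t. indicator E2 t * G_integrand n p q t) \<in> borel_measurable (lborel \<Otimes>\<^sub>M lborel)"
proof -
  have E2: "E2 = {t. 0 < fst t \<and> fst t < snd t \<and> snd t < 1}" by (auto simp: E2_def)
  show ?thesis unfolding G_integrand_def E2 by measurable
qed

lemma nn_integral_G_integrand_term:
  "(\<integral>\<^sup>+ y. ennreal (indicator {0<..<1} y *
      (fact p * fact n * esym_harm p (Suc K) / real (Suc K) ^ Suc n * (y ^ K * (ln (1 / (1 - y))) ^ q)))
    \<partial>lborel) = ennreal (fact p * fact q * fact n * G_term n p q (Suc K))"
proof -
  define c where "c = fact p * fact n * esym_harm p (Suc K) / real (Suc K) ^ Suc n"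
  have c: "c \<ge> 0" using esym_harm_nonneg by (simp add: c_def)
  have "(\<integral>\<^sup>+ y. ennreal (indicator {0<..<1} y * (c * (y ^ K * (ln (1 / (1 - y))) ^ q))) \<partial>lborel) =
      (\<integral>\<^sup>+ y. ennreal c * ennreal (indicator {0<..<1} y * (y ^ K * (ln (1 / (1 - y))) ^ q)) \<partial>lborel)"
    using c by (intro nn_integral_cong) (auto simp: indicator_def ennreal_mult')
  also have "\<dots> = ennreal c * ennreal (fact q * hsym_harm q (Suc K) / real (Suc K))"
    by (simp add: nn_integral_cmult nn_integral_power_ln_inverse_one_minus_power)
  also have "\<dots> = ennreal (fact p * fact q * fact n * G_term n p q (Suc K))"
    using c hsym_harm_nonneg[of q "Suc K"]
    by (simp add: ennreal_mult[symmetric] c_def G_term_def field_simps del: of_nat_Suc)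
  finally show ?thesis by (simp add: c_def)
qed

lemma nn_integral_G_integrand:
  "(\<integral>\<^sup>+ t. ennreal (indicator E2 t * G_integrand n p q t) \<partial>lborel) =
     ennreal (fact p * fact q * fact n * (\<Sum>K. G_term n p q K))"
proof -
  define h where "h K y = indicator {0<..<1} y * (fact p * fact n * esym_harm p (Suc K) /
    real (Suc K) ^ Suc n * (y ^ K * (ln (1 / (1 - y))) ^ q))" for K y
  have "(\<integral>\<^sup>+ t. ennreal (indicator E2 t * G_integrand n p q t) \<partial>lborel) =
      (\<integral>\<^sup>+ y. (\<integral>\<^sup>+ x. ennreal (indicator E2 (x, y) * G_integrand n p q (x, y)) \<partial>lborel) \<partial>lborel)"
    unfolding lborel_prod[symmetric]
    by (intro lborel_pair.nn_integral_snd[symmetric] measurable_compose[OF G_integrand_measurable]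
        measurable_ennreal)
  also have "\<dots> = (\<integral>\<^sup>+ y. (\<Sum>K. ennreal (h K y)) \<partial>lborel)"
  proof (rule nn_integral_cong)
    fix y :: real
    show "(\<integral>\<^sup>+ x. ennreal (indicator E2 (x, y) * G_integrand n p q (x, y)) \<partial>lborel) = (\<Sum>K. ennreal (h K y))"
    proof (cases "0 < y \<and> y < 1")
      case True
      then show ?thesis using nn_integral_G_integrand_inner[of y n p q] by (simp add: h_def)
    next
      case False
      then have "indicator E2 (x, y) = (0::real)" "h K y = 0" for x K
        by (auto simp: E2_def indicator_def h_def)
      then show ?thesis by simp
    qed
  qed
  also have "\<dots> = (\<Sum>K. \<integral>\<^sup>+ y. ennreal (h K y) \<partial>lborel)"
    by (rule nn_integral_suminf) (simp add: h_def, measurable)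
  also have "\<dots> = (\<Sum>K. ennreal (fact p * fact q * fact n * G_term n p q (Suc K)))"
    unfolding h_def nn_integral_G_integrand_term ..
  also have "\<dots> = ennreal (fact p * fact q * fact n * (\<Sum>K. G_term n p q K))"
  proof (rule suminf_ennreal_eq)
    show "0 \<le> fact p * fact q * fact n * G_term n p q (Suc K)" for K
      using G_term_nonneg by simp
    have "(\<lambda>K. G_term n p q (Suc K)) sums (\<Sum>K. G_term n p q K)"
      using summable_sums[OF summable_G_term[of n p q]] by (subst sums_Suc_iff) (simp add: G_term_def)
    then show "(\<lambda>K. fact p * fact q * fact n * G_term n p q (Suc K)) sums
        (fact p * fact q * fact n * (\<Sum>K. G_term n p q K))"
      by (rule sums_mult)
  qed
  finally show ?thesis .
qed

lemma integral_G_integrand: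
  "(LINT t : E2 | lborel. G_integrand n p q t) = fact p * fact q * fact n * (\<Sum>K. G_term n p q K)"
proof -
  have "0 \<le> indicator E2 t * G_integrand n p q t" for t
    by (auto simp: E2_def indicator_def G_integrand_def ln_ge_zero_iff intro!: divide_nonneg_pos)
  moreover have "(\<lambda>t. indicator E2 t * G_integrand n p q t) \<in> borel_measurable lborel"
    using G_integrand_measurable by (simp only: lborel_prod)
  moreover have "0 \<le> (\<Sum>K. G_term n p q K)"
    using suminf_nonneg[OF summable_G_term G_term_nonneg] .
  ultimately have "has_bochner_integral lborel (\<lambda>t. indicator E2 t * G_integrand n p q t)
      (fact p * fact q * fact n * (\<Sum>K. G_term n p q K))"
    by (intro has_bochner_integral_nn_integral nn_integral_G_integrand) auto
  then show ?thesis unfolding set_lebesgue_integral_def by (simp add: has_bochner_integral_integral_eq)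
qed

theorem theorem2p2:
  fixes n p q :: nat
  shows "Gfun n p q =
           (\<Sum>r = p + 1..p + q + 1. real ((r - 1) choose p) *
              (\<Sum>a \<in> compositions r (p + q + 1). mzv (butlast a @ [last a + n + 1]))) \<and>
         Gfun n p q =
           1 / (fact p * fact q * fact n) *
           (LINT t : E2 | lborel.
              (ln (1 / (1 - fst t))) ^ p * (ln (1 / (1 - snd t))) ^ q * (ln (snd t / fst t)) ^ n
              / ((1 - fst t) * snd t))"
proof
  show "Gfun n p q =
      (\<Sum>r = p + 1..p + q + 1. real ((r - 1) choose p) *
         (\<Sum>a \<in> compositions r (p + q + 1). mzv (butlast a @ [last a + n + 1])))"
    by (simp only: Gfun_eq_suminf_G_term sum_compositions_mzv_eq_suminf_G_term)
  show "Gfun n p q =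
      1 / (fact p * fact q * fact n) *
      (LINT t : E2 | lborel.
         (ln (1 / (1 - fst t))) ^ p * (ln (1 / (1 - snd t))) ^ q * (ln (snd t / fst t)) ^ n
         / ((1 - fst t) * snd t))"
    using integral_G_integrand[of n p q] by (simp add: Gfun_eq_suminf_G_term G_integrand_def)
qed

end
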